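(* For a real tensor $T\in\mathbb{R}^{n\times n\times n}$ of order 3, the following are equivalent: (i) $T\in\mathrm{OT}_n(\mathbb{R})$; (ii) for each of the three families of slices (the $x$-slices $X_1,\dots,X_n$, the $y$-slices $Y_1,\dots,Y_n$, and the $z$-slices $Z_1,\dots,Z_n$), denoting the family by $M_1,\dots,M_n$, the matrices $M_kM_l^T$ and $M_k^TM_l$ are symmetric for all $k,l\in\{1,\dots,n\}$.
   Context: Associate to $T$ the trilinear form $t(x,y,z)=\sum_{i,j,k}T_{ijk}x_iy_jz_k$. $\mathrm{OT}_n(K)$ is the set of tensors whose trilinear form can be written $t(x,y,z)=g(Ax,By,Cz)$ with $A,B,C\in M_n(K)$ orthogonal ($A^TA=\mathrm{Id}$ etc.) and $g(x,y,z)=\sum_{i=1}^n\alpha_ix_iy_iz_i$, $\alpha_i\in K$. Slices: $X_k=(T_{kjl})_{j,l}$ (matrix of the bilinear form $\partial t/\partial x_k$ in $(y,z)$), $Y_k=(T_{ikl})_{i,l}$ (matrix of $\partial t/\partial y_k$ in $(x,z)$), $Z_k=(T_{ijk})_{i,j}$ (matrix of $\partial t/\partial z_k$ in $(x,y)$). *)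

theory Defs
  imports "HOL-Analysis.Analysis"
begin

type_synonym 'n tensor3 = "real ^ 'n ^ 'n ^ 'n"

definition trilin :: "'n::finite tensor3 \<Rightarrow> real^'n \<Rightarrow> real^'n \<Rightarrow> real^'n \<Rightarrow> real" where
  "trilin T x y z = (\<Sum>i\<in>UNIV. \<Sum>j\<in>UNIV. \<Sum>k\<in>UNIV. T $ i $ j $ k * x $ i * y $ j * z $ k)"

definition diag_form :: "real^'n::finite \<Rightarrow> real^'n \<Rightarrow> real^'n \<Rightarrow> real^'n \<Rightarrow> real" where
  "diag_form \<alpha> x y z = (\<Sum>i\<in>UNIV. \<alpha> $ i * x $ i * y $ i * z $ i)"

definition OT :: "'n::finite tensor3 set" where
  "OT = {T. \<exists>A B C :: real^'n^'n. \<exists>\<alpha> :: real^'n.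
            orthogonal_matrix A \<and> orthogonal_matrix B \<and> orthogonal_matrix C \<and>
            (\<forall>x y z. trilin T x y z = diag_form \<alpha> (A *v x) (B *v y) (C *v z))}"

definition xslice :: "'n::finite tensor3 \<Rightarrow> 'n \<Rightarrow> real^'n^'n" where
  "xslice T k = (\<chi> j l. T $ k $ j $ l)"
definition yslice :: "'n::finite tensor3 \<Rightarrow> 'n \<Rightarrow> real^'n^'n" where
  "yslice T k = (\<chi> i l. T $ i $ k $ l)"
definition zslice :: "'n::finite tensor3 \<Rightarrow> 'n \<Rightarrow> real^'n^'n" where
  "zslice T k = (\<chi> i j. T $ i $ j $ k)"

definition symmetric_mat :: "real^'n^'n \<Rightarrow> bool" where
  "symmetric_mat M \<longleftrightarrow> transpose M = M"

definition slice_cond :: "('n::finite \<Rightarrow> real^'n^'n) \<Rightarrow> bool" where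
  "slice_cond M \<longleftrightarrow> (\<forall>k l. symmetric_mat (M k ** transpose (M l)) \<and>
                             symmetric_mat (transpose (M k) ** M l))"

end

theory Submission
  imports Defs
begin

text \<open>
  If T = \<Sum>_r \<alpha>_r A_r \<otimes> B_r \<otimes> C_r with A, B, C orthogonal (A_r the rows), every family of
  slices has the form M_k = P^T D_k Q with P, Q orthogonal and D_k diagonal, so
  M_k M_l^T = P^T D_k D_l P and M_k^T M_l = Q^T D_k D_l Q are symmetric.

  Conversely, the conditions on the x-slices make the Gram matrices X_k^T X_l a commuting family
  of symmetric matrices. A joint orthonormal eigenbasis V of this family yields a simultaneous
  singular value decomposition X_k = U^T diag(d_k) V. The conditions on the y-slices then force
  the vectors (d_k(r))_k, r = 1..n, to be pairwise orthogonal, hence to be \<alpha>_r times the rows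
  A_r of an orthogonal matrix, and T = \<Sum>_r \<alpha>_r A_r \<otimes> U_r \<otimes> V_r.
\<close>

section \<open>Orthonormal sets\<close>

definition orthonormal :: "'a::real_inner set \<Rightarrow> bool" where
  "orthonormal E \<longleftrightarrow> (\<forall>e\<in>E. norm e = 1) \<and> pairwise orthogonal E"

lemma orthonormal_finite_card_le:
  fixes E :: "'a::euclidean_space set"
  assumes "orthonormal E"
  shows "finite E" "card E \<le> DIM('a)"
proof -
  have "independent E"
    using assms pairwise_orthogonal_independent by (force simp: orthonormal_def)
  then show "finite E" "card E \<le> DIM('a)"
    using independent_bound by auto
qed

lemma exists_orthogonal_to_small_set:
  fixes E :: "'a::euclidean_space set"
  assumes "finite E" "card E < DIM('a)"
  obtains x where "x \<noteq> 0" "\<And>e. e \<in> E \<Longrightarrow> x \<bullet> e = 0"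
proof -
  have "dim E < DIM('a)"
    using assms dim_le_card' le_less_trans by blast
  then obtain x where "x \<noteq> 0" "\<And>y. y \<in> span E \<Longrightarrow> orthogonal x y"
    using orthogonal_to_subspace_exists by blast
  then show thesis
    using that by (metis orthogonal_def span_base)
qed

lemma orthonormal_insert:
  assumes "orthonormal E" "norm x = 1" "\<And>e. e \<in> E \<Longrightarrow> x \<bullet> e = 0"
  shows "orthonormal (insert x E)"
  using assms by (auto simp: orthonormal_def orthogonal_def intro!: pairwise_orthogonal_insert)

lemma orthonormal_extend_to_basis:
  fixes E0 :: "'a::euclidean_space set"
  assumes step: "\<And>E. orthonormal E \<Longrightarrow> (\<forall>e\<in>E. P e) \<Longrightarrow> card E < DIM('a) \<Longrightarrow>
                  \<exists>x. norm x = 1 \<and> P x \<and> (\<forall>e\<in>E. x \<bullet> e = 0)"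
    and E0: "orthonormal E0" "\<forall>e\<in>E0. P e"
  shows "\<exists>E. E0 \<subseteq> E \<and> orthonormal E \<and> (\<forall>e\<in>E. P e) \<and> card E = DIM('a)"
proof -
  define K where "K = {E. E0 \<subseteq> E \<and> orthonormal E \<and> (\<forall>e\<in>E. P e)}"
  have fin: "finite (card ` K)"
    by (rule finite_subset[of _ "{..DIM('a)}"]) (auto simp: K_def dest: orthonormal_finite_card_le)
  have "card ` K \<noteq> {}"
    using E0 by (auto simp: K_def)
  then have "Max (card ` K) \<in> card ` K"
    by (rule Max_in[OF fin])
  then obtain E where E: "E \<in> K" "card E = Max (card ` K)"
    by auto
  have E_props: "E0 \<subseteq> E" "orthonormal E" "\<forall>e\<in>E. P e"
    using E(1) by (auto simp: K_def)
  have "card E \<ge> DIM('a)"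
  proof (rule ccontr)
    assume "\<not> ?thesis"
    then obtain x where x: "norm x = 1" "P x" "\<forall>e\<in>E. x \<bullet> e = 0"
      using step E_props by (meson not_le)
    then have "x \<notin> E"
      by (metis inner_eq_zero_iff norm_zero zero_neq_one)
    have "insert x E \<in> K"
      using E_props x by (auto simp: K_def orthonormal_insert)
    then have "card (insert x E) \<le> card E"
      unfolding E(2) by (rule Max_ge[OF fin imageI])
    moreover have "card (insert x E) = Suc (card E)"
      using \<open>x \<notin> E\<close> orthonormal_finite_card_le(1)[OF E_props(2)] by simp
    ultimately show False
      by simp
  qed
  then have "card E = DIM('a)"
    using orthonormal_finite_card_le(2)[OF E_props(2)] by (rule antisym[rotated])
  with E_props show ?thesis
    by blast
qed

lemma orthonormal_extend_to_orthonormal_basis: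
  fixes E0 :: "'a::euclidean_space set"
  assumes "orthonormal E0"
  shows "\<exists>E. E0 \<subseteq> E \<and> orthonormal E \<and> card E = DIM('a)"
proof -
  have step: "\<exists>x. norm x = 1 \<and> True \<and> (\<forall>e\<in>E. x \<bullet> e = 0)"
    if E: "orthonormal E" "\<forall>e\<in>E. True" "card E < DIM('a)" for E :: "'a set"
  proof -
    obtain x where "x \<noteq> 0" "\<And>e. e \<in> E \<Longrightarrow> x \<bullet> e = 0"
      using exists_orthogonal_to_small_set[OF orthonormal_finite_card_le(1)[OF E(1)] E(3)] by blast
    then show ?thesis
      by (intro exI[of _ "x /\<^sub>R norm x"]) simp
  qed
  show ?thesis
    using orthonormal_extend_to_basis[where P = "\<lambda>_. True", OF step assms] by simp
qed

lemma orthogonal_matrix_rows_inner: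
  fixes A :: "real^'n::finite^'n"
  assumes "orthogonal_matrix A"
  shows "A $ r \<bullet> A $ s = (if r = s then 1 else 0)"
proof -
  have "(A ** transpose A) $ r $ s = A $ r \<bullet> A $ s"
    by (simp add: matrix_matrix_mult_def transpose_def inner_vec_def)
  then show ?thesis
    using assms by (simp add: orthogonal_matrix_def mat_def)
qed

lemma orthogonal_matrix_of_orthonormal_rows:
  fixes a :: "'n::finite \<Rightarrow> real^'n"
  assumes "\<And>r. norm (a r) = 1" "\<And>r s. r \<noteq> s \<Longrightarrow> a r \<bullet> a s = 0"
  shows "orthogonal_matrix (\<chi> r. a r)"
proof -
  have "row r (\<chi> r. a r) = a r" for r
    by (simp add: row_def vec_eq_iff)
  then show ?thesis
    using assms by (simp add: orthogonal_matrix_orthonormal_rows orthogonal_def)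
qed

lemma orthonormal_basis_as_rows:
  fixes E :: "(real^'n::finite) set" and a :: "'n \<Rightarrow> real^'n"
  assumes E: "orthonormal E" "card E = CARD('n)" and a: "inj_on a S" "a ` S \<subseteq> E"
  obtains A where "orthogonal_matrix A" "\<And>r. r \<in> S \<Longrightarrow> A $ r = a r" "\<And>r. A $ r \<in> E"
proof -
  have "finite E"
    using E orthonormal_finite_card_le by blast
  have "card (E - a ` S) = CARD('n) - card S"
    using E a card_image[OF a(1)] \<open>finite E\<close> by (simp add: card_Diff_subset finite_subset)
  also have "\<dots> = card (- S)"
    using card_Diff_subset[of S UNIV] by (simp add: Compl_eq_Diff_UNIV)
  finally have "card (- S) = card (E - a ` S)" ..
  then obtain g where g: "bij_betw g (- S) (E - a ` S)"
    using finite_same_card_bij[of "- S" "E - a ` S"] \<open>finite E\<close> by auto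
  define b where "b r = (if r \<in> S then a r else g r)" for r
  have bE: "b r \<in> E" for r
    using a g by (auto simp: b_def bij_betw_def)
  have "b r \<noteq> b s" if "r \<noteq> s" for r s
  proof (cases "r \<in> S"; cases "s \<in> S")
    assume "r \<in> S" "s \<in> S"
    then show ?thesis
      using that a(1) by (simp add: b_def inj_on_def) blast
  next
    assume "r \<notin> S" "s \<notin> S"
    then show ?thesis
      using that g by (simp add: b_def bij_betw_def inj_on_def) blast
  next
    assume "r \<in> S" "s \<notin> S"
    then show ?thesis
      using g by (auto simp: b_def bij_betw_def)
  next
    assume "r \<notin> S" "s \<in> S"
    then show ?thesis
      using g by (auto simp: b_def bij_betw_def)
  qed
  then have "b r \<bullet> b s = 0" if "r \<noteq> s" for r s
    using that bE E by (auto simp: orthonormal_def pairwise_def orthogonal_def)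
  moreover have "norm (b r) = 1" for r
    using bE E by (auto simp: orthonormal_def)
  ultimately show thesis
    using that[of "\<chi> r. b r"] orthogonal_matrix_of_orthonormal_rows[of b] bE by (auto simp: b_def)
qed

section \<open>Eigenvectors of symmetric matrices\<close>

lemma inner_matrix_vector_mult_left:
  fixes A :: "real^'n::finite^'m::finite"
  shows "(A *v x) \<bullet> y = x \<bullet> (transpose A *v y)"
  by (metis dot_lmul_matrix vector_transpose_matrix)

lemma symmetric_mat_inner_commute:
  fixes S :: "real^'n::finite^'n"
  assumes "symmetric_mat S"
  shows "(S *v x) \<bullet> y = x \<bullet> (S *v y)"
  using assms by (simp add: inner_matrix_vector_mult_left symmetric_mat_def)

lemma linear_le_quadratic_imp_zero:
  fixes a b :: real
  assumes "\<And>t. a * t \<le> b * t\<^sup>2"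
  shows "a = 0"
proof (rule ccontr)
  assume "a \<noteq> 0"
  define t where "t = a / (2 * \<bar>b\<bar> + 2)"
  have a: "a = (2 * \<bar>b\<bar> + 2) * t"
    by (simp add: t_def)
  with \<open>a \<noteq> 0\<close> have "t\<^sup>2 > 0"
    by simp
  have "(2 * \<bar>b\<bar> + 2) * t\<^sup>2 = a * t"
    by (simp add: a power2_eq_square)
  also have "\<dots> \<le> b * t\<^sup>2"
    by (rule assms)
  finally have "2 * \<bar>b\<bar> + 2 \<le> b"
    using \<open>t\<^sup>2 > 0\<close> by simp
  then show False
    using abs_ge_self[of b] by linarith
qed

text \<open>A maximiser of the Rayleigh quotient on an invariant subspace is an eigenvector:
  perturbing it by its own residual z = Sx - \<lambda>x, which is orthogonal to x, would otherwise
  increase the quotient to first order.\<close>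
lemma rayleigh_maximiser_eigenvector:
  fixes S :: "real^'n::finite^'n"
  assumes sym: "symmetric_mat S" and V: "subspace V" and inv: "\<And>u. u \<in> V \<Longrightarrow> S *v u \<in> V"
    and x: "x \<in> V" "x \<bullet> x = 1"
    and max: "\<And>u. u \<in> V \<Longrightarrow> u \<bullet> (S *v u) \<le> (x \<bullet> (S *v x)) * (u \<bullet> u)"
  shows "S *v x = (x \<bullet> (S *v x)) *\<^sub>R x"
proof -
  define lam where "lam = x \<bullet> (S *v x)"
  define z where "z = S *v x - lam *\<^sub>R x"
  have zV: "z \<in> V"
    using x inv V by (simp add: z_def subspace_diff subspace_scale)
  have "x \<bullet> z = 0"
    using x by (simp add: z_def lam_def inner_diff_right)
  then have zx: "z \<bullet> x = 0"
    by (simp add: inner_commute)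
  have zSx: "z \<bullet> (S *v x) = z \<bullet> z"
    using zx by (simp add: z_def inner_diff_right)
  have "2 * (z \<bullet> z) * t \<le> (lam * (z \<bullet> z) - z \<bullet> (S *v z)) * t\<^sup>2" for t
  proof -
    define u where "u = x + t *\<^sub>R z"
    have "u \<in> V"
      using x zV V by (simp add: u_def subspace_add subspace_scale)
    then have "u \<bullet> (S *v u) \<le> lam * (u \<bullet> u)"
      using max by (simp add: lam_def)
    moreover have "x \<bullet> (S *v z) = z \<bullet> z"
      using symmetric_mat_inner_commute[OF sym, of x z] zSx by (simp add: inner_commute)
    ultimately show ?thesis
      using x zx zSx
      by (simp add: u_def inner_commute lam_def power2_eq_square algebra_simps)
  qed
  then have "2 * (z \<bullet> z) = 0"
    by (rule linear_le_quadratic_imp_zero)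
  then show ?thesis
    by (simp add: z_def lam_def)
qed

lemma symmetric_invariant_subspace_has_eigenvector:
  fixes S :: "real^'n::finite^'n"
  assumes sym: "symmetric_mat S" and V: "subspace V" "V \<noteq> {0}"
    and inv: "\<And>u. u \<in> V \<Longrightarrow> S *v u \<in> V"
  obtains x lam where "x \<in> V" "x \<noteq> 0" "S *v x = lam *\<^sub>R x"
proof -
  define K where "K = V \<inter> sphere 0 1"
  have "compact K"
    unfolding K_def using V by (intro closed_Int_compact closed_subspace) auto
  obtain v where "v \<in> V" "v \<noteq> 0"
    using V subspace_0 by blast
  then have "v /\<^sub>R norm v \<in> K"
    using V by (auto simp: K_def subspace_scale)
  then have "K \<noteq> {}"
    by blast
  moreover have "continuous_on K (\<lambda>u. u \<bullet> (S *v u))"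
    by (intro continuous_intros linear_continuous_on matrix_vector_mul_bounded_linear)
  ultimately obtain x where xK: "x \<in> K" and xmax: "\<And>y. y \<in> K \<Longrightarrow> y \<bullet> (S *v y) \<le> x \<bullet> (S *v x)"
    using continuous_attains_sup[OF \<open>compact K\<close>] by blast
  have xV: "x \<in> V" and xx: "x \<bullet> x = 1"
    using xK by (auto simp: K_def norm_eq_1)
  have "u \<bullet> (S *v u) \<le> (x \<bullet> (S *v x)) * (u \<bullet> u)" if "u \<in> V" for u
  proof (cases "u = 0")
    case False
    then have "u /\<^sub>R norm u \<in> K"
      using that V by (auto simp: K_def subspace_scale)
    then have "(u /\<^sub>R norm u) \<bullet> (S *v (u /\<^sub>R norm u)) \<le> x \<bullet> (S *v x)"
      by (rule xmax)
    then show ?thesis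
      using False by (simp add: matrix_vector_mult_scaleR power2_norm_eq_inner[symmetric]
          power2_eq_square field_simps)
  qed simp
  then have "S *v x = (x \<bullet> (S *v x)) *\<^sub>R x"
    using rayleigh_maximiser_eigenvector[OF sym V(1) inv xV xx] by blast
  moreover have "x \<noteq> 0"
    using xx by auto
  ultimately show thesis
    using that xV by blast
qed

definition joint_eigenvector :: "('i \<Rightarrow> real^'n::finite^'n) \<Rightarrow> real^'n \<Rightarrow> bool" where
  "joint_eigenvector F x \<longleftrightarrow> (\<forall>p. \<exists>lam. F p *v x = lam *\<^sub>R x)"

lemma joint_eigenvector_scale:
  "joint_eigenvector F x \<Longrightarrow> joint_eigenvector F (c *\<^sub>R x)"
  unfolding joint_eigenvector_def by (metis matrix_vector_mult_scaleR scaleR_left_commute)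

text \<open>Among the nonzero subspaces of W invariant under the family, one of least dimension is
  contained in an eigenspace of each member: that eigenspace, cut down to the subspace, is again
  invariant because the family commutes.\<close>
lemma commuting_symmetric_common_eigenvector:
  fixes F :: "'i \<Rightarrow> real^'n::finite^'n"
  assumes sym: "\<And>p. symmetric_mat (F p)" and comm: "\<And>p q. F p ** F q = F q ** F p"
    and W: "subspace W" "W \<noteq> {0}" and inv: "\<And>p x. x \<in> W \<Longrightarrow> F p *v x \<in> W"
  shows "\<exists>x\<in>W. x \<noteq> 0 \<and> joint_eigenvector F x"
proof -
  define K where "K = {V. subspace V \<and> V \<subseteq> W \<and> V \<noteq> {0} \<and> (\<forall>p. \<forall>x\<in>V. F p *v x \<in> V)}"
  have "W \<in> K"
    using W inv by (auto simp: K_def)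
  then obtain V where "V \<in> K" and V_min: "\<And>V'. V' \<in> K \<Longrightarrow> dim V \<le> dim V'"
    using ex_has_least_nat[of "\<lambda>V. V \<in> K" W dim] by blast
  then have V: "subspace V" "V \<subseteq> W" "V \<noteq> {0}" and V_inv: "\<And>p x. x \<in> V \<Longrightarrow> F p *v x \<in> V"
    by (auto simp: K_def)
  have eigenspace: "\<exists>lam. \<forall>x\<in>V. F p *v x = lam *\<^sub>R x" for p
  proof -
    obtain y lam where y: "y \<in> V" "y \<noteq> 0" "F p *v y = lam *\<^sub>R y"
      using symmetric_invariant_subspace_has_eigenvector[OF sym V(1,3) V_inv] by blast
    define V' where "V' = {x \<in> V. F p *v x = lam *\<^sub>R x}"
    have "subspace V'"
      using V(1) unfolding V'_def subspace_def
      by (auto simp: algebra_simps)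
    moreover have "V' \<noteq> {0}"
      using y by (auto simp: V'_def)
    moreover have "F q *v x \<in> V'" if "x \<in> V'" for q x
    proof -
      have "F p *v (F q *v x) = F q *v (F p *v x)"
        by (simp add: matrix_vector_mul_assoc comm)
      also have "\<dots> = lam *\<^sub>R (F q *v x)"
        using that by (simp add: V'_def matrix_vector_mult_scaleR)
      finally show ?thesis
        using that V_inv by (auto simp: V'_def)
    qed
    ultimately have "V' \<in> K"
      using V(2) by (auto simp: K_def V'_def)
    then have "V' = V"
      using V_min subspace_dim_equal[OF \<open>subspace V'\<close> V(1)] by (auto simp: V'_def)
    then show ?thesis
      by (auto simp: V'_def)
  qed
  obtain x where x: "x \<in> V" "x \<noteq> 0"
    using V subspace_0 by blast
  have "joint_eigenvector F x"
    unfolding joint_eigenvector_def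
  proof
    fix p
    obtain lam where "\<forall>x\<in>V. F p *v x = lam *\<^sub>R x"
      using eigenspace by blast
    then show "\<exists>lam. F p *v x = lam *\<^sub>R x"
      using x by blast
  qed
  with x V(2) show ?thesis
    by blast
qed

lemma joint_eigenvectors_orthogonal_complement_invariant:
  fixes F :: "'i \<Rightarrow> real^'n::finite^'n"
  assumes sym: "\<And>p. symmetric_mat (F p)" and E: "\<forall>e\<in>E. joint_eigenvector F e"
    and x: "\<forall>e\<in>E. orthogonal e x"
  shows "\<forall>e\<in>E. orthogonal e (F p *v x)"
proof
  fix e
  assume "e \<in> E"
  then obtain lam where "F p *v e = lam *\<^sub>R e"
    using E by (auto simp: joint_eigenvector_def)
  then have "(F p *v e) \<bullet> x = 0"
    using x \<open>e \<in> E\<close> by (simp add: orthogonal_def)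
  then show "orthogonal e (F p *v x)"
    by (simp add: orthogonal_def symmetric_mat_inner_commute[OF sym])
qed

lemma commuting_symmetric_joint_eigenbasis:
  fixes F :: "'i \<Rightarrow> real^'n::finite^'n"
  assumes sym: "\<And>p. symmetric_mat (F p)" and comm: "\<And>p q. F p ** F q = F q ** F p"
  obtains V where "orthogonal_matrix V" "\<And>r. joint_eigenvector F (V $ r)"
proof -
  have step: "\<exists>x. norm x = 1 \<and> joint_eigenvector F x \<and> (\<forall>e\<in>E. x \<bullet> e = 0)"
    if E: "orthonormal E" "\<forall>e\<in>E. joint_eigenvector F e" "card E < DIM(real^'n)" for E
  proof -
    define W where "W = {x. \<forall>e\<in>E. orthogonal e x}"
    obtain x0 where "x0 \<noteq> 0" "\<And>e. e \<in> E \<Longrightarrow> x0 \<bullet> e = 0"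
      using exists_orthogonal_to_small_set[OF orthonormal_finite_card_le(1)[OF E(1)] E(3)] by blast
    then have W_nonzero: "W \<noteq> {0}"
      by (auto simp: W_def orthogonal_def inner_commute)
    have W: "subspace W"
      unfolding W_def by (rule subspace_orthogonal_to_vectors)
    have W_inv: "F p *v x \<in> W" if "x \<in> W" for p x
      using joint_eigenvectors_orthogonal_complement_invariant[OF sym E(2)] that by (simp add: W_def)
    have "\<exists>x\<in>W. x \<noteq> 0 \<and> joint_eigenvector F x"
      by (rule commuting_symmetric_common_eigenvector[OF sym comm W W_nonzero W_inv])
    then obtain x where x: "x \<in> W" "x \<noteq> 0" "joint_eigenvector F x"
      by blast
    have "norm (x /\<^sub>R norm x) = 1" "\<forall>e\<in>E. (x /\<^sub>R norm x) \<bullet> e = 0"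
      using x by (auto simp: W_def orthogonal_def inner_commute)
    with x(3) show ?thesis
      by (blast intro: joint_eigenvector_scale)
  qed
  have "orthonormal ({} :: (real^'n) set)"
    by (simp add: orthonormal_def)
  then obtain E where E: "orthonormal E" "\<forall>e\<in>E. joint_eigenvector F e" "card E = DIM(real^'n)"
    using orthonormal_extend_to_basis[OF step] by blast
  then obtain V where "orthogonal_matrix V" "\<And>r. V $ r \<in> E"
    using orthonormal_basis_as_rows[OF E(1), of "\<lambda>_. 0" "{}"] by auto
  with E(2) that show thesis
    by blast
qed

section \<open>Simultaneous singular value decomposition\<close>

lemma exists_orthogonal_matrix_scaled_rows:
  fixes w :: "'n::finite \<Rightarrow> real^'n"
  assumes orth: "\<And>r s. r \<noteq> s \<Longrightarrow> w r \<bullet> w s = 0"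
  shows "\<exists>A \<alpha>. orthogonal_matrix A \<and> (\<forall>r. w r = \<alpha> $ r *\<^sub>R A $ r)"
proof -
  define S where "S = {r. w r \<noteq> 0}"
  define a where "a r = w r /\<^sub>R norm (w r)" for r
  have a_norm: "norm (a r) = 1" if "r \<in> S" for r
    using that by (simp add: S_def a_def)
  have a_orth: "a r \<bullet> a s = 0" if "r \<noteq> s" for r s
    using orth[OF that] by (simp add: a_def)
  have "inj_on a S"
    by (metis a_norm a_orth inj_onI inner_eq_zero_iff norm_zero zero_neq_one)
  have "orthonormal (a ` S)"
    using a_norm a_orth by (auto simp: orthonormal_def pairwise_def orthogonal_def) metis
  then obtain E where E: "a ` S \<subseteq> E" "orthonormal E" "card E = DIM(real^'n)"
    using orthonormal_extend_to_orthonormal_basis by blast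
  have "\<exists>A. orthogonal_matrix A \<and> (\<forall>r\<in>S. A $ r = a r)"
    using orthonormal_basis_as_rows[OF E(2) _ \<open>inj_on a S\<close> E(1)] E(3) by (metis DIM_cart DIM_real mult_1_right)
  then obtain A where A: "orthogonal_matrix A" "\<And>r. r \<in> S \<Longrightarrow> A $ r = a r"
    by blast
  have "w r = (\<chi> r. norm (w r)) $ r *\<^sub>R A $ r" for r
    by (cases "r \<in> S") (auto simp: A(2) a_def S_def)
  with A(1) show ?thesis
    by blast
qed

lemma inner_square_eq_imp_parallel:
  fixes g h :: "'a::real_inner"
  assumes "(g \<bullet> h)\<^sup>2 = (g \<bullet> g) * (h \<bullet> h)" "h \<noteq> 0"
  shows "g = ((g \<bullet> h) / (h \<bullet> h)) *\<^sub>R h"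
proof -
  define c where "c = (g \<bullet> h) / (h \<bullet> h)"
  have "h \<bullet> h > 0"
    using assms(2) by simp
  have "(g - c *\<^sub>R h) \<bullet> (g - c *\<^sub>R h) = g \<bullet> g - 2 * c * (g \<bullet> h) + c\<^sup>2 * (h \<bullet> h)"
    by (simp add: inner_diff_left inner_diff_right inner_commute power2_eq_square algebra_simps)
  also have "\<dots> = 0"
    using assms(1) \<open>h \<bullet> h > 0\<close> by (simp add: c_def power2_eq_square field_simps)
  finally show ?thesis
    by (simp add: c_def)
qed

lemma exists_orthogonal_matrix_parallel_rows:
  fixes g :: "'i \<Rightarrow> 'n::finite \<Rightarrow> real^'n"
  assumes orth: "\<And>k l r s. r \<noteq> s \<Longrightarrow> g k r \<bullet> g l s = 0"
    and parallel: "\<And>k l r. (g k r \<bullet> g l r)\<^sup>2 = (g k r \<bullet> g k r) * (g l r \<bullet> g l r)"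
  obtains U d where "orthogonal_matrix U" "\<And>k r. g k r = d k $ r *\<^sub>R U $ r"
proof -
  define w where "w r = (if \<exists>m. g m r \<noteq> 0 then g (SOME m. g m r \<noteq> 0) r else 0)" for r
  have w: "w r \<noteq> 0 \<and> (\<exists>m. w r = g m r)" if "\<exists>m. g m r \<noteq> 0" for r
    using that someI_ex[OF that] by (auto simp: w_def)
  have "w r \<bullet> w s = 0" if "r \<noteq> s" for r s
    using orth[OF that] by (simp add: w_def)
  then have "\<exists>U \<beta>. orthogonal_matrix U \<and> (\<forall>r. w r = \<beta> $ r *\<^sub>R U $ r)"
    by (rule exists_orthogonal_matrix_scaled_rows)
  then obtain U \<beta> where U: "orthogonal_matrix U" and w_U: "\<And>r. w r = \<beta> $ r *\<^sub>R U $ r"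
    by blast
  define d where
    "d k = (\<chi> r. if \<exists>m. g m r \<noteq> 0 then (g k r \<bullet> w r) / (w r \<bullet> w r) * \<beta> $ r else 0)" for k
  have "g k r = d k $ r *\<^sub>R U $ r" for k r
  proof (cases "\<exists>m. g m r \<noteq> 0")
    case True
    then obtain m where "w r = g m r" "w r \<noteq> 0"
      using w by blast
    then have "g k r = ((g k r \<bullet> w r) / (w r \<bullet> w r)) *\<^sub>R w r"
      using inner_square_eq_imp_parallel parallel by metis
    then show ?thesis
      using True by (simp add: d_def w_U)
  qed (simp add: d_def)
  with U that show thesis
    by blast
qed

definition diag_mat :: "'a::zero^'n \<Rightarrow> 'a^'n^'n" where
  "diag_mat v = (\<chi> i j. if i = j then v $ i else 0)"

lemma transpose_diag_mat [simp]: "transpose (diag_mat v) = diag_mat v"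
  by (simp add: transpose_def diag_mat_def vec_eq_iff)

lemma matrix_mult_diag_mat_component:
  "(A ** diag_mat v) $ i $ j = A $ i $ j * v $ j"
  by (simp add: matrix_matrix_mult_def diag_mat_def if_distrib[of "(*) _"] cong: if_cong)

lemma diag_mat_mult_diag_mat [simp]:
  "diag_mat u ** diag_mat v = diag_mat (u * v :: 'a::comm_semiring_1^'n::finite)"
  by (simp add: vec_eq_iff matrix_mult_diag_mat_component) (simp add: diag_mat_def)

lemma svd_form_component:
  fixes P Q :: "real^'n::finite^'n"
  shows "(transpose P ** diag_mat v ** Q) $ j $ m = (\<Sum>r\<in>UNIV. P $ r $ j * v $ r * Q $ r $ m)"
  unfolding matrix_matrix_mult_def[of "transpose P ** diag_mat v" Q]
  by (simp add: matrix_mult_diag_mat_component transpose_def)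

lemma svd_form_of_rows:
  fixes M P Q :: "real^'n::finite^'n"
  assumes Q: "orthogonal_matrix Q" and rows: "\<And>r. M *v Q $ r = v $ r *\<^sub>R P $ r"
  shows "M = transpose P ** diag_mat v ** Q"
proof -
  have "M ** transpose Q = transpose P ** diag_mat v"
  proof (simp add: vec_eq_iff, intro allI)
    fix j r
    have "(M ** transpose Q) $ j $ r = (M *v Q $ r) $ j"
      by (simp add: matrix_matrix_mult_def matrix_vector_mult_def transpose_def)
    then show "(M ** transpose Q) $ j $ r = (transpose P ** diag_mat v) $ j $ r"
      by (simp add: rows matrix_mult_diag_mat_component transpose_def mult.commute)
  qed
  then have "M ** (transpose Q ** Q) = transpose P ** diag_mat v ** Q"
    by (simp add: matrix_mul_assoc)
  with Q show ?thesis
    by (simp add: orthogonal_matrix)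
qed

lemma symmetric_mat_congruence_diag:
  fixes P :: "real^'n::finite^'n"
  shows "symmetric_mat (transpose P ** diag_mat v ** P)"
  by (simp add: symmetric_mat_def matrix_transpose_mul matrix_mul_assoc)

lemma slice_cond_of_svd_form:
  fixes M :: "'n::finite \<Rightarrow> real^'n^'n"
  assumes P: "orthogonal_matrix P" and Q: "orthogonal_matrix Q"
    and M: "\<And>k. M k = transpose P ** diag_mat (d k) ** Q"
  shows "slice_cond M"
proof -
  have "M k ** transpose (M l) = transpose P ** diag_mat (d k) ** (Q ** transpose Q) ** diag_mat (d l) ** P"
    for k l by (simp add: M matrix_transpose_mul matrix_mul_assoc)
  also have "\<dots> k l = transpose P ** diag_mat (d k * d l) ** P" for k l
    using Q by (simp add: orthogonal_matrix_def matrix_mul_assoc flip: diag_mat_mult_diag_mat)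
  moreover have "transpose (M k) ** M l = transpose Q ** diag_mat (d k) ** (P ** transpose P) ** diag_mat (d l) ** Q"
    for k l by (simp add: M matrix_transpose_mul matrix_mul_assoc)
  moreover have "\<dots> k l = transpose Q ** diag_mat (d k * d l) ** Q" for k l
    using P by (simp add: orthogonal_matrix_def matrix_mul_assoc flip: diag_mat_mult_diag_mat)
  ultimately show ?thesis
    by (simp add: slice_cond_def symmetric_mat_congruence_diag)
qed

lemma slice_cond_transpose_mult_commute:
  assumes "slice_cond M"
  shows "transpose (M k) ** M l = transpose (M l) ** M k"
proof -
  have "transpose (transpose (M k) ** M l) = transpose (M k) ** M l"
    using assms by (simp add: slice_cond_def symmetric_mat_def)
  then show ?thesis
    by (simp add: matrix_transpose_mul)
qed

lemma slice_cond_mult_transpose_commute: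
  assumes "slice_cond M"
  shows "M k ** transpose (M l) = M l ** transpose (M k)"
proof -
  have "transpose (M k ** transpose (M l)) = M k ** transpose (M l)"
    using assms by (simp add: slice_cond_def symmetric_mat_def)
  then show ?thesis
    by (simp add: matrix_transpose_mul)
qed

lemma slice_cond_gram_interchange:
  assumes "slice_cond M"
  shows "(transpose (M k) ** M l) ** (transpose (M a) ** M b) =
         (transpose (M k) ** M a) ** (transpose (M l) ** M b)"
proof -
  have "(transpose (M k) ** M l) ** (transpose (M a) ** M b) =
        transpose (M k) ** (M l ** transpose (M a)) ** M b"
    by (simp add: matrix_mul_assoc)
  also have "\<dots> = transpose (M k) ** (M a ** transpose (M l)) ** M b"
    by (simp only: slice_cond_mult_transpose_commute[OF assms, of l a])
  finally show ?thesis
    by (simp add: matrix_mul_assoc)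
qed

lemma slice_cond_gram_joint_eigenbasis:
  fixes M :: "'n::finite \<Rightarrow> real^'n^'n"
  assumes sc: "slice_cond M"
  obtains V lam where "orthogonal_matrix V"
    "\<And>k l r. (transpose (M k) ** M l) *v V $ r = lam k l r *\<^sub>R V $ r"
proof -
  define G where "G p = transpose (M (fst p)) ** M (snd p)" for p
  have "symmetric_mat (G p)" for p
    using sc by (simp add: slice_cond_def G_def)
  moreover have "G p ** G q = G q ** G p" for p q
    using slice_cond_gram_interchange[OF sc, of "fst p" "snd p" "fst q" "snd q"]
      slice_cond_gram_interchange[OF sc, of "fst q" "snd q" "fst p" "snd p"]
      slice_cond_transpose_mult_commute[OF sc, of "fst p" "fst q"]
      slice_cond_transpose_mult_commute[OF sc, of "snd p" "snd q"]
    by (simp add: G_def)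
  ultimately obtain V where V: "orthogonal_matrix V" "\<And>r. joint_eigenvector G (V $ r)"
    using commuting_symmetric_joint_eigenbasis by blast
  then have "\<forall>k l r. \<exists>c. (transpose (M k) ** M l) *v V $ r = c *\<^sub>R V $ r"
    by (simp add: joint_eigenvector_def G_def)
  then obtain lam where "\<And>k l r. (transpose (M k) ** M l) *v V $ r = lam k l r *\<^sub>R V $ r"
    by metis
  with V(1) that show thesis
    by blast
qed

text \<open>The images M_k V_r of a joint eigenbasis of the Gram matrices are orthogonal for different
  r and, by the interchange identity, parallel for equal r.\<close>
lemma simultaneous_svd:
  fixes M :: "'n::finite \<Rightarrow> real^'n^'n"
  assumes sc: "slice_cond M"
  obtains U V d where "orthogonal_matrix U" "orthogonal_matrix V"
    "\<And>k r. M k *v V $ r = d k $ r *\<^sub>R U $ r"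
proof -
  obtain V lam where V: "orthogonal_matrix V"
    and lam: "\<And>k l r. (transpose (M k) ** M l) *v V $ r = lam k l r *\<^sub>R V $ r"
    using slice_cond_gram_joint_eigenbasis[OF sc] by blast
  have V_inner: "V $ r \<bullet> V $ s = (if r = s then 1 else 0)" for r s
    by (rule orthogonal_matrix_rows_inner[OF V])
  define g where "g k r = M k *v V $ r" for k r
  have gram: "g k r \<bullet> g l s = lam k l s * (V $ r \<bullet> V $ s)" for k l r s
    by (simp add: g_def inner_matrix_vector_mult_left matrix_vector_mul_assoc lam)
  have "lam k l r * lam k l r = lam k k r * lam l l r" for k l r
  proof -
    define G where "G k l = transpose (M k) ** M l" for k l
    have lam_G: "G a b *v V $ r = lam a b r *\<^sub>R V $ r" for a b
      by (simp add: G_def lam)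
    have "(G k l ** G k l) *v V $ r = (G k k ** G l l) *v V $ r"
      using slice_cond_gram_interchange[OF sc, of k l k l] by (simp add: G_def)
    then have "(lam k l r * lam k l r) *\<^sub>R V $ r = (lam k k r * lam l l r) *\<^sub>R V $ r"
      by (simp only: matrix_vector_mul_assoc[symmetric] lam_G matrix_vector_mult_scaleR
          scaleR_scaleR mult.commute)
    moreover have "V $ r \<noteq> 0"
      using V_inner[of r r] by auto
    ultimately show ?thesis
      by simp
  qed
  then have "(g k r \<bullet> g l r)\<^sup>2 = (g k r \<bullet> g k r) * (g l r \<bullet> g l r)" for k l r
    by (simp add: gram V_inner power2_eq_square)
  moreover have "g k r \<bullet> g l s = 0" if "r \<noteq> s" for k l r s
    using that by (simp add: gram V_inner)
  ultimately obtain U d where U: "orthogonal_matrix U" and g_U: "\<And>k r. g k r = d k $ r *\<^sub>R U $ r"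
    using exists_orthogonal_matrix_parallel_rows by metis
  show thesis
    by (rule that[of U V d, OF U V]) (use g_U in \<open>simp add: g_def\<close>)
qed

section \<open>Orthogonally decomposable tensors\<close>

lemma diag_form_matrix_vector_mult:
  fixes A B C :: "real^'n::finite^'n"
  shows "diag_form \<alpha> (A *v x) (B *v y) (C *v z) =
         trilin (\<chi> i j k. \<Sum>r\<in>UNIV. \<alpha> $ r * A $ r $ i * B $ r $ j * C $ r $ k) x y z"
proof -
  have "diag_form \<alpha> (A *v x) (B *v y) (C *v z) =
        (\<Sum>r\<in>UNIV. \<Sum>i\<in>UNIV. \<Sum>j\<in>UNIV. \<Sum>k\<in>UNIV.
           \<alpha> $ r * A $ r $ i * B $ r $ j * C $ r $ k * x $ i * y $ j * z $ k)"
    by (simp add: diag_form_def matrix_vector_mult_def sum_distrib_left sum_distrib_right mult_ac)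
  also have "\<dots> = (\<Sum>i\<in>UNIV. \<Sum>j\<in>UNIV. \<Sum>k\<in>UNIV. \<Sum>r\<in>UNIV.
           \<alpha> $ r * A $ r $ i * B $ r $ j * C $ r $ k * x $ i * y $ j * z $ k)"
    by (subst sum.swap, rule sum.cong[OF refl], subst sum.swap, rule sum.cong[OF refl], rule sum.swap)
  finally show ?thesis
    by (simp add: trilin_def sum_distrib_right)
qed

lemma trilin_axis: "trilin T (axis i 1) (axis j 1) (axis k 1) = T $ i $ j $ k"
  by (simp add: trilin_def axis_def if_distrib[of "(*) _"] cong: if_cong)

lemma OT_iff_diagonal_decomposition:
  fixes T :: "'n::finite tensor3"
  shows "T \<in> OT \<longleftrightarrow> (\<exists>A B C :: real^'n^'n. \<exists>\<alpha>. orthogonal_matrix A \<and> orthogonal_matrix B \<and>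
           orthogonal_matrix C \<and> (\<forall>i j k. T $ i $ j $ k = (\<Sum>r\<in>UNIV. \<alpha> $ r * A $ r $ i * B $ r $ j * C $ r $ k)))"
proof -
  have "(\<forall>x y z. trilin T x y z = diag_form \<alpha> (A *v x) (B *v y) (C *v z)) \<longleftrightarrow>
        (\<forall>i j k. T $ i $ j $ k = (\<Sum>r\<in>UNIV. \<alpha> $ r * A $ r $ i * B $ r $ j * C $ r $ k))"
    (is "?forms \<longleftrightarrow> ?entries") for A B C :: "real^'n^'n" and \<alpha>
  proof
    assume forms: ?forms
    show ?entries
    proof (intro allI)
      fix i j k
      have "T $ i $ j $ k = diag_form \<alpha> (A *v axis i 1) (B *v axis j 1) (C *v axis k 1)"
        using forms by (simp flip: trilin_axis)
      then show "T $ i $ j $ k = (\<Sum>r\<in>UNIV. \<alpha> $ r * A $ r $ i * B $ r $ j * C $ r $ k)"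
        by (simp only: diag_form_matrix_vector_mult trilin_axis vec_lambda_beta)
    qed
  next
    assume ?entries
    then have "T = (\<chi> i j k. \<Sum>r\<in>UNIV. \<alpha> $ r * A $ r $ i * B $ r $ j * C $ r $ k)"
      by (simp add: vec_eq_iff)
    then show ?forms
      by (simp add: diag_form_matrix_vector_mult)
  qed
  then show ?thesis
    unfolding OT_def by blast
qed

lemma xslice_form_as_yslice_sum:
  "(\<chi> k. y \<bullet> (xslice T k *v z)) = (\<Sum>a\<in>UNIV. y $ a *\<^sub>R (yslice T a *v z))"
  by (simp add: vec_eq_iff inner_vec_def matrix_vector_mult_def xslice_def yslice_def
      sum_distrib_left mult_ac)

text \<open>The vector of the values y \<bullet> X_k z is \<Sum>_a y_a Y_a z, and the symmetry of Y_a^T Y_b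
  lets z and z' be exchanged in the inner product of two such vectors.\<close>
lemma yslice_cond_exchange:
  fixes T :: "'n::finite tensor3"
  assumes "slice_cond (yslice T)"
  shows "(\<Sum>k\<in>UNIV. (y \<bullet> (xslice T k *v z)) * (y' \<bullet> (xslice T k *v z'))) =
         (\<Sum>k\<in>UNIV. (y \<bullet> (xslice T k *v z')) * (y' \<bullet> (xslice T k *v z)))"
proof -
  have swap: "(yslice T a *v u) \<bullet> (yslice T b *v v) = (yslice T a *v v) \<bullet> (yslice T b *v u)"
    for a b u v
  proof -
    have sym: "symmetric_mat (transpose (yslice T a) ** yslice T b)"
      using assms by (simp add: slice_cond_def)
    have "(yslice T a *v u) \<bullet> (yslice T b *v v) = u \<bullet> ((transpose (yslice T a) ** yslice T b) *v v)"
      by (subst inner_matrix_vector_mult_left) (simp only: matrix_vector_mul_assoc)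
    also have "\<dots> = v \<bullet> ((transpose (yslice T a) ** yslice T b) *v u)"
      using symmetric_mat_inner_commute[OF sym, of u v] by (simp add: inner_commute)
    also have "\<dots> = (yslice T a *v v) \<bullet> (yslice T b *v u)"
      by (subst inner_matrix_vector_mult_left) (simp only: matrix_vector_mul_assoc)
    finally show ?thesis .
  qed
  have "(\<Sum>k\<in>UNIV. (y \<bullet> (xslice T k *v z)) * (y' \<bullet> (xslice T k *v z'))) =
        (\<chi> k. y \<bullet> (xslice T k *v z)) \<bullet> (\<chi> k. y' \<bullet> (xslice T k *v z'))" for z z'
    by (simp add: inner_vec_def)
  then show ?thesis
    by (simp add: xslice_form_as_yslice_sum inner_sum_left inner_sum_right swap)
qed

lemma OT_imp_slice_cond:
  fixes T :: "'n::finite tensor3"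
  assumes "T \<in> OT"
  shows "slice_cond (xslice T) \<and> slice_cond (yslice T) \<and> slice_cond (zslice T)"
proof -
  obtain A B C :: "real^'n^'n" and \<alpha> where A: "orthogonal_matrix A" and B: "orthogonal_matrix B"
    and C: "orthogonal_matrix C"
    and T: "\<And>i j k. T $ i $ j $ k = (\<Sum>r\<in>UNIV. \<alpha> $ r * A $ r $ i * B $ r $ j * C $ r $ k)"
    using assms unfolding OT_iff_diagonal_decomposition by blast
  have X: "xslice T k = transpose B ** diag_mat (\<chi> r. \<alpha> $ r * A $ r $ k) ** C" for k
    by (simp add: vec_eq_iff svd_form_component xslice_def T mult_ac)
  have Y: "yslice T k = transpose A ** diag_mat (\<chi> r. \<alpha> $ r * B $ r $ k) ** C" for k
    by (simp add: vec_eq_iff svd_form_component yslice_def T mult_ac)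
  have Z: "zslice T k = transpose A ** diag_mat (\<chi> r. \<alpha> $ r * C $ r $ k) ** B" for k
    by (simp add: vec_eq_iff svd_form_component zslice_def T mult_ac)
  show ?thesis
    using slice_cond_of_svd_form[where M = "xslice T", OF B C X]
      slice_cond_of_svd_form[where M = "yslice T", OF A C Y]
      slice_cond_of_svd_form[where M = "zslice T", OF A B Z] by blast
qed

lemma slice_cond_imp_OT:
  fixes T :: "'n::finite tensor3"
  assumes x: "slice_cond (xslice T)" and y: "slice_cond (yslice T)"
  shows "T \<in> OT"
proof -
  obtain U V :: "real^'n^'n" and d where U: "orthogonal_matrix U" and V: "orthogonal_matrix V"
    and svd: "\<And>k r. xslice T k *v V $ r = d k $ r *\<^sub>R U $ r"
    using simultaneous_svd[OF x] by blast
  have coeff: "U $ p \<bullet> (xslice T k *v V $ q) = (if p = q then d k $ p else 0)" for k p q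
    by (simp add: svd orthogonal_matrix_rows_inner[OF U])
  have "(\<Sum>k\<in>UNIV. d k $ p * d k $ q) = 0" if "p \<noteq> q" for p q
    using yslice_cond_exchange[OF y, of "U $ p" "V $ p" "U $ q" "V $ q"] that
    by (simp only: coeff) simp
  then have "(\<chi> k. d k $ p) \<bullet> (\<chi> k. d k $ q) = 0" if "p \<noteq> q" for p q
    using that by (simp add: inner_vec_def)
  then have "\<exists>A \<alpha>. orthogonal_matrix A \<and> (\<forall>r. (\<chi> k. d k $ r) = \<alpha> $ r *\<^sub>R A $ r)"
    by (rule exists_orthogonal_matrix_scaled_rows)
  then obtain A :: "real^'n^'n" and \<alpha> where A: "orthogonal_matrix A"
    and d: "\<And>r. (\<chi> k. d k $ r) = \<alpha> $ r *\<^sub>R A $ r"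
    by blast
  have "T $ k $ j $ m = (\<Sum>r\<in>UNIV. \<alpha> $ r * A $ r $ k * U $ r $ j * V $ r $ m)" for k j m
  proof -
    have "T $ k $ j $ m = (transpose U ** diag_mat (d k) ** V) $ j $ m"
      using svd_form_of_rows[OF V svd] by (simp add: xslice_def)
    also have "\<dots> = (\<Sum>r\<in>UNIV. U $ r $ j * d k $ r * V $ r $ m)"
      by (rule svd_form_component)
    finally show ?thesis
      using d by (simp add: vec_eq_iff mult_ac)
  qed
  with A U V show ?thesis
    unfolding OT_iff_diagonal_decomposition by blast
qed

theorem theorem35:
  fixes T :: "'n::finite tensor3"
  shows "T \<in> OT \<longleftrightarrow>
         (slice_cond (xslice T) \<and> slice_cond (yslice T) \<and> slice_cond (zslice T))"
  using OT_imp_slice_cond slice_cond_imp_OT by blast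

end
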